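(* Let $G$ be a connected planar graph, $R\ge1$ an integer and $\epsilon\in(0,1]$. There is an absolute constant $K$ such that for every pair $u,v$ of vertices, Algorithm TC with parameters $R,\epsilon$ separates $u$ and $v$ with probability at most $K\,d(u,v)/R$.
   Context: Let $G=(V,E)$ be a connected unweighted planar graph and $d(\cdot,\cdot)$ its shortest-path distance. Two vertices are separated if they lie in different output clusters. Algorithm TC with integer parameter $R\ge 1$ and $\epsilon\in(0,1]$: Phase 0: set $F=\emptyset$; choose an arbitrary root $r_0$, let the level of $x$ be its distance from $r_0$ in $G$, sample $k$ uniformly from $\{0,\dots,R-1\}$, and add to $F$ every edge joining a vertex at level $\ell$ to one at level $\ell+1$ with $\ell\equiv k\pmod R$. Then for phases $i=1,2$: for each connected component $C$ of $(V,E\setminus F)$ (components as at the start of the phase), choose as root $r_i$ the vertex of $C$ closest to the root $r_{i-1}$ used in the previous phase for the component from which $C$ arose (ties broken arbitrarily), let levels be distances from $r_i$ within $C$, sample $k_1$ uniformly from $\{0,\dots,R-1\}$, sample $\kappa\in(0,R]$ from the density $\epsilon\,\kappa^{\epsilon-1}/R^{\epsilon}$ and set $k_2=\lceil\kappa\rceil$, and add to $F$ every edge of $C$ joining a vertex at level $\ell$ to a vertex at level $\ell+1$ with $\ell\equiv k_1\pmod R$ or $\ell\equiv k_1+k_2\pmod R$. All samples are independent. Output the connected components of $(V,E\setminus F)$ as clusters. *)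

theory Defs
  imports "HOL-Analysis.Analysis" "HOL-Probability.Probability"
begin

definition simple_graph :: "nat set \<Rightarrow> nat set set \<Rightarrow> bool" where
  "simple_graph V E \<longleftrightarrow> finite V \<and> (\<forall>e\<in>E. e \<subseteq> V \<and> card e = 2)"

definition adjrel :: "nat set set \<Rightarrow> (nat \<times> nat) set" where
  "adjrel E' = {(x, y). {x, y} \<in> E'}"

definition reach :: "nat set set \<Rightarrow> nat \<Rightarrow> nat \<Rightarrow> bool" where
  "reach E' x y \<longleftrightarrow> (x, y) \<in> (adjrel E')\<^sup>*"

definition gdist :: "nat set set \<Rightarrow> nat \<Rightarrow> nat \<Rightarrow> nat" where
  "gdist E' x y = (LEAST n. (x, y) \<in> adjrel E' ^^ n)"

definition connected_graph :: "nat set \<Rightarrow> nat set set \<Rightarrow> bool" where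
  "connected_graph V E \<longleftrightarrow> (\<forall>x\<in>V. \<forall>y\<in>V. reach E x y)"

definition comp :: "nat set \<Rightarrow> nat set set \<Rightarrow> nat \<Rightarrow> nat set" where
  "comp V E' x = {y \<in> V. reach E' x y}"

definition comps :: "nat set \<Rightarrow> nat set set \<Rightarrow> nat set set" where
  "comps V E' = comp V E' ` V"

definition planar :: "nat set \<Rightarrow> nat set set \<Rightarrow> bool" where
  "planar V E \<longleftrightarrow>
     (\<exists>(f :: nat \<Rightarrow> complex) (\<gamma> :: nat set \<Rightarrow> real \<Rightarrow> complex).
        inj_on f V \<and>
        (\<forall>e\<in>E. arc (\<gamma> e) \<and> {pathstart (\<gamma> e), pathfinish (\<gamma> e)} = f ` e) \<and>
        (\<forall>e\<in>E. \<forall>e'\<in>E. e \<noteq> e' \<longrightarrow> path_image (\<gamma> e) \<inter> path_image (\<gamma> e') \<subseteq> f ` (e \<inter> e')) \<and>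
        (\<forall>e\<in>E. \<forall>x\<in>V. f x \<in> path_image (\<gamma> e) \<longrightarrow> x \<in> e))"

text \<open>Edges of E' joining level l to level l+1 (levels = distances from r using E', i.e. within
  the component of r), where l mod R lies in ks.\<close>
definition level_cuts :: "nat \<Rightarrow> nat set set \<Rightarrow> nat \<Rightarrow> nat set \<Rightarrow> nat set set" where
  "level_cuts R E' r ks =
     {e \<in> E'. \<exists>x y. e = {x, y} \<and> reach E' r x \<and>
                    gdist E' r y = gdist E' r x + 1 \<and> gdist E' r x mod R \<in> ks}"

definition kappa_measure :: "nat \<Rightarrow> real \<Rightarrow> real measure" where
  "kappa_measure R \<epsilon> = density lborel
     (\<lambda>\<kappa>. ennreal (indicator {0<..real R} \<kappa> * \<epsilon> * \<kappa> powr (\<epsilon> - 1) / real R powr \<epsilon>))"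

definition k2_pmf :: "nat \<Rightarrow> real \<Rightarrow> nat pmf" where
  "k2_pmf R \<epsilon> = embed_pmf (\<lambda>j. measure (kappa_measure R \<epsilon>) {\<kappa>. nat \<lceil>\<kappa>\<rceil> = j})"

text \<open>State after a phase: (F, lvl), where lvl x is the level of x in that phase (distance from
  the root of x's component, within that component).\<close>
definition phase0 :: "nat \<Rightarrow> nat set set \<Rightarrow> nat \<Rightarrow> (nat set set \<times> (nat \<Rightarrow> nat)) pmf" where
  "phase0 R E r0 = map_pmf (\<lambda>k. (level_cuts R E r0 {k}, gdist E r0)) (pmf_of_set {0..<R})"

text \<open>tb i C lvl: the root chosen for component C in phase i, given previous-phase levels
  (the tie-breaking rule).\<close>
definition valid_tiebreak :: "(nat \<Rightarrow> nat set \<Rightarrow> (nat \<Rightarrow> nat) \<Rightarrow> nat) \<Rightarrow> bool" where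
  "valid_tiebreak tb \<longleftrightarrow>
     (\<forall>i C lv. C \<noteq> {} \<and> finite C \<longrightarrow> tb i C lv \<in> C \<and> (\<forall>y\<in>C. lv (tb i C lv) \<le> lv y))"

definition phase_step ::
  "nat \<Rightarrow> real \<Rightarrow> (nat \<Rightarrow> nat set \<Rightarrow> (nat \<Rightarrow> nat) \<Rightarrow> nat) \<Rightarrow> nat \<Rightarrow> nat set \<Rightarrow> nat set set
   \<Rightarrow> nat set set \<times> (nat \<Rightarrow> nat) \<Rightarrow> (nat set set \<times> (nat \<Rightarrow> nat)) pmf" where
  "phase_step R \<epsilon> tb i V E st =
     (let F = fst st; lvl = snd st; E' = E - F; Cs = comps V E';
          root = (\<lambda>C. tb i C lvl)
      in map_pmf
           (\<lambda>\<sigma>. (F \<union> (\<Union>C\<in>Cs. level_cuts R E' (root C)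
                              {fst (\<sigma> C), (fst (\<sigma> C) + snd (\<sigma> C)) mod R}),
                 (\<lambda>x. gdist E' (root (comp V E' x)) x)))
           (Pi_pmf Cs (0, 0) (\<lambda>C. pair_pmf (pmf_of_set {0..<R}) (k2_pmf R \<epsilon>))))"

definition TC ::
  "nat \<Rightarrow> real \<Rightarrow> (nat \<Rightarrow> nat set \<Rightarrow> (nat \<Rightarrow> nat) \<Rightarrow> nat) \<Rightarrow> nat set \<Rightarrow> nat set set \<Rightarrow> nat
   \<Rightarrow> nat set set pmf" where
  "TC R \<epsilon> tb V E r0 =
     map_pmf fst
       (bind_pmf (phase0 R E r0) (\<lambda>s0.
          bind_pmf (phase_step R \<epsilon> tb 1 V E s0) (\<lambda>s1.
            phase_step R \<epsilon> tb 2 V E s1)))"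

definition separated :: "nat set set \<Rightarrow> nat set set \<Rightarrow> nat \<Rightarrow> nat \<Rightarrow> bool" where
  "separated E F u v \<longleftrightarrow> \<not> reach (E - F) u v"

end

theory Submission
  imports Defs
begin

text \<open>Fix a shortest u-v path. The pair u, v can only be separated if one of its d(u,v) edges
  is cut, so by the union bound it suffices to show that a fixed edge is cut with probability
  O(1/R). Within one phase the edge joins two consecutive levels of a single component, so it
  is cut only if the lower level is congruent mod R to one of the (at most two) sampled
  residues, each of which is uniform once the other offset is fixed: probability at most 1/R in
  phase 0 and 2/R in each later phase, hence K = 5.\<close>

lemma measure_pmf_prob_bind_le:
  fixes p :: "'a pmf" and f :: "'a \<Rightarrow> 'b pmf"
  assumes "0 \<le> c"
    and "\<And>x. x \<in> set_pmf p \<Longrightarrow> x \<notin> B \<Longrightarrow> measure_pmf.prob (f x) A \<le> c"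
  shows "measure_pmf.prob (bind_pmf p f) A \<le> measure_pmf.prob p B + c"
proof -
  have "emeasure (bind_pmf p f) A = (\<integral>\<^sup>+x. emeasure (f x) A \<partial>p)" by simp
  also have "\<dots> \<le> (\<integral>\<^sup>+x. (indicator B x + ennreal c) \<partial>p)"
  proof (rule nn_integral_mono_AE, rule AE_pmfI)
    fix x assume x: "x \<in> set_pmf p"
    show "emeasure (f x) A \<le> indicator B x + ennreal c"
    proof (cases "x \<in> B")
      case True
      then show ?thesis by (simp add: measure_pmf.emeasure_le_1 add_increasing2)
    next
      case False
      then show ?thesis
        using assms(2)[OF x False] by (simp add: measure_pmf.emeasure_eq_measure ennreal_leI)
    qed
  qed
  also have "\<dots> = ennreal (measure_pmf.prob p B + c)"
    using assms(1) by (simp add: nn_integral_add measure_pmf.emeasure_eq_measure ennreal_plus)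
  finally have "ennreal (measure_pmf.prob (bind_pmf p f) A) \<le> ennreal (measure_pmf.prob p B + c)"
    by (simp only: measure_pmf.emeasure_eq_measure)
  moreover have "0 \<le> measure_pmf.prob p B + c" using assms(1) by simp
  ultimately show ?thesis using ennreal_le_iff by blast
qed

lemma reach_trans: "reach E x y \<Longrightarrow> reach E y z \<Longrightarrow> reach E x z"
  unfolding reach_def by (rule rtrancl_trans)

lemma reach_sym: "reach E x y \<Longrightarrow> reach E y x"
proof -
  have "sym (adjrel E)" by (auto simp: sym_def adjrel_def insert_commute)
  then show "reach E x y \<Longrightarrow> reach E y x"
    unfolding reach_def by (metis sym_rtrancl symD)
qed

lemma reach_edge: "{x, y} \<in> E \<Longrightarrow> reach E x y"
  unfolding reach_def adjrel_def by auto

lemma comp_eq_if_reach: "reach E' x y \<Longrightarrow> comp V E' x = comp V E' y"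
  unfolding comp_def using reach_trans reach_sym by blast

lemma reach_relpow_gdist: "reach E u v \<Longrightarrow> (u, v) \<in> adjrel E ^^ gdist E u v"
  unfolding reach_def gdist_def by (rule LeastI_ex) (simp add: rtrancl_power)

lemma relpow_adjrel_imp_path_edges:
  "(u, v) \<in> adjrel E ^^ n \<Longrightarrow>
   \<exists>P \<subseteq> E. finite P \<and> card P \<le> n \<and> (\<forall>F. P \<inter> F = {} \<longrightarrow> reach (E - F) u v)"
proof (induction n arbitrary: v)
  case 0
  then show ?case by (intro exI[of _ "{}"]) (auto simp: reach_def)
next
  case (Suc n)
  from Suc.prems obtain y where y: "(u, y) \<in> adjrel E ^^ n" and "(y, v) \<in> adjrel E"
    by (rule relpow_Suc_E)
  then have yv: "{y, v} \<in> E" by (simp add: adjrel_def)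
  from Suc.IH[OF y] obtain P where P: "P \<subseteq> E" "finite P" "card P \<le> n"
    "\<forall>F. P \<inter> F = {} \<longrightarrow> reach (E - F) u y" by blast
  show ?case
  proof (intro exI[of _ "insert {y, v} P"] conjI allI impI)
    fix F assume "insert {y, v} P \<inter> F = {}"
    then have "reach (E - F) u y" and "reach (E - F) y v"
      using P(4) yv by (auto intro: reach_edge)
    then show "reach (E - F) u v" by (rule reach_trans)
  qed (use P yv in \<open>simp_all add: card_insert_if\<close>)
qed

lemma prob_separated_le_gdist:
  assumes "reach E u v" and "0 \<le> p"
    and edge: "\<And>e. e \<in> E \<Longrightarrow> measure_pmf.prob M {F. e \<in> F} \<le> p"
  shows "measure_pmf.prob M {F. separated E F u v} \<le> real (gdist E u v) * p"
proof -
  obtain P where P: "P \<subseteq> E" "finite P" "card P \<le> gdist E u v"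
    "\<forall>F. P \<inter> F = {} \<longrightarrow> reach (E - F) u v"
    using relpow_adjrel_imp_path_edges[OF reach_relpow_gdist[OF assms(1)]] by blast
  have "measure_pmf.prob M {F. separated E F u v} \<le> measure_pmf.prob M (\<Union>e\<in>P. {F. e \<in> F})"
    using P(4) unfolding separated_def by (intro measure_pmf.finite_measure_mono) auto
  also have "\<dots> \<le> (\<Sum>e\<in>P. measure_pmf.prob M {F. e \<in> F})"
    using P(2) by (intro measure_pmf.finite_measure_subadditive_finite) auto
  also have "\<dots> \<le> (\<Sum>e\<in>P. p)"
    using P(1) edge by (intro sum_mono) auto
  also have "\<dots> \<le> real (gdist E u v) * p"
    using P(3) \<open>0 \<le> p\<close> by (simp add: mult_right_mono)
  finally show ?thesis .
qed

lemma level_cuts_residue: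
  assumes "e \<in> level_cuts R E' r ks0"
  shows "\<exists>l. \<forall>ks. e \<in> level_cuts R E' r ks \<longleftrightarrow> l \<in> ks"
proof -
  from assms obtain x y where xy: "e \<in> E'" "e = {x, y}" "reach E' r x"
      "gdist E' r y = gdist E' r x + 1"
    unfolding level_cuts_def by blast
  have lower_level: "gdist E' r x' mod R = gdist E' r x mod R"
    if "e = {x', y'}" "gdist E' r y' = gdist E' r x' + 1" for x' y'
    using that xy(2,4) by (auto simp: doubleton_eq_iff)
  have "e \<in> level_cuts R E' r ks \<longleftrightarrow> gdist E' r x mod R \<in> ks" for ks
  proof
    assume "e \<in> level_cuts R E' r ks"
    then obtain x' y' where "e = {x', y'}" "gdist E' r y' = gdist E' r x' + 1"
        "gdist E' r x' mod R \<in> ks"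
      unfolding level_cuts_def by blast
    with lower_level show "gdist E' r x mod R \<in> ks" by simp
  next
    assume "gdist E' r x mod R \<in> ks"
    with xy show "e \<in> level_cuts R E' r ks"
      unfolding level_cuts_def by blast
  qed
  then show ?thesis by blast
qed

lemma level_cuts_same_comp:
  assumes "e \<in> level_cuts R E' r ks" and "e \<in> level_cuts R E' r' ks'"
  shows "comp V E' r = comp V E' r'"
proof -
  have "reach E' s a" if "e \<in> level_cuts R E' s js" "a \<in> e" for s js a
  proof -
    from that(1) obtain x y where xy: "e = {x, y}" "e \<in> E'" "reach E' s x"
      unfolding level_cuts_def by blast
    then have "reach E' s y" using reach_trans reach_edge by metis
    then show ?thesis using xy that(2) by blast
  qed
  moreover obtain a where "a \<in> e"
    using assms(1) unfolding level_cuts_def by blast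
  ultimately have "reach E' r a" and "reach E' r' a"
    using assms by blast+
  then have "reach E' r r'"
    using reach_trans[OF _ reach_sym] by blast
  then show ?thesis by (rule comp_eq_if_reach)
qed

lemma tiebreak_root_comp:
  assumes "valid_tiebreak tb" and "finite V" and "C \<in> comps V E'"
  shows "tb i C lv \<in> C" and "comp V E' (tb i C lv) = C"
proof -
  from assms(3) obtain z where z: "z \<in> V" "C = comp V E' z" unfolding comps_def by blast
  then have "z \<in> C" and "finite C" using assms(2) by (auto simp: comp_def reach_def)
  then show "tb i C lv \<in> C" using assms(1) unfolding valid_tiebreak_def by blast
  then show "comp V E' (tb i C lv) = C"
    using z comp_eq_if_reach[of E' z "tb i C lv" V] by (simp add: comp_def)
qed

lemma inj_on_add_mod: "inj_on (\<lambda>a. (a + b) mod R) {..<R}" for b R :: nat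
proof -
  have wlog: "a = a'" if "(a + b) mod R = (a' + b) mod R" "a \<le> a'" "a' < R" for a a' :: nat
  proof -
    have "R dvd a' - a" using that mod_eq_dvd_iff_nat[of "a + b" "a' + b" R] by simp
    then show "a = a'" using that(2,3) nat_dvd_not_less[of "a' - a" R] by linarith
  qed
  show ?thesis
  proof (rule inj_onI)
    fix a a' assume "a \<in> {..<R}" "a' \<in> {..<R}" "(a + b) mod R = (a' + b) mod R"
    then show "a = a'" using wlog[of a a'] wlog[of a' a] by (cases "a \<le> a'") auto
  qed
qed

lemma card_mod_shift_preimage_le:
  "card {a \<in> {0..<R}. (a + b) mod R = l} \<le> Suc 0" for R :: nat
  using inj_on_add_mod[of b R] by (subst card_le_Suc0_iff_eq) (auto dest: inj_onD)

lemma prob_uniform_hits_residue_le: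
  assumes "1 \<le> R"
  shows "measure_pmf.prob (pair_pmf (pmf_of_set {0..<R}) q)
           {ab. l \<in> {fst ab, (fst ab + snd ab) mod R}} \<le> 2 / real R"
proof -
  have "pair_pmf (pmf_of_set {0..<R}) q = bind_pmf q (\<lambda>b. map_pmf (\<lambda>a. (a, b)) (pmf_of_set {0..<R}))"
    unfolding pair_pmf_def map_pmf_def by (rule bind_commute_pmf)
  moreover have "measure_pmf.prob (bind_pmf q (\<lambda>b. map_pmf (\<lambda>a. (a, b)) (pmf_of_set {0..<R})))
      {ab. l \<in> {fst ab, (fst ab + snd ab) mod R}} \<le> measure_pmf.prob q {} + 2 / real R"
  proof (rule measure_pmf_prob_bind_le)
    fix b
    have hits: "{0..<R} \<inter> {a. l = a \<or> l = (a + b) mod R} \<subseteq> {l} \<union> {a \<in> {0..<R}. (a + b) mod R = l}"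
      by auto
    have "card ({l} \<union> {a \<in> {0..<R}. (a + b) mod R = l})
        \<le> card {l} + card {a \<in> {0..<R}. (a + b) mod R = l}"
      by (rule card_Un_le)
    also have "\<dots> \<le> 2"
      using card_mod_shift_preimage_le[of R b l] by simp
    finally have "card ({0..<R} \<inter> {a. l = a \<or> l = (a + b) mod R}) \<le> 2"
      using card_mono[OF _ hits] by simp
    then show "measure_pmf.prob (map_pmf (\<lambda>a. (a, b)) (pmf_of_set {0..<R}))
        {ab. l \<in> {fst ab, (fst ab + snd ab) mod R}} \<le> 2 / real R"
      using assms by (simp add: measure_pmf_of_set vimage_def divide_right_mono)
  qed simp
  ultimately show ?thesis by simp
qed

lemma phase0_cut_prob_le:
  assumes "1 \<le> R"
  shows "measure_pmf.prob (phase0 R E r0) {s. e \<in> fst s} \<le> 1 / real R"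
proof -
  have "k = k'" if cut: "e \<in> level_cuts R E r0 {k}" "e \<in> level_cuts R E r0 {k'}" for k k'
  proof -
    obtain l where "\<forall>ks. e \<in> level_cuts R E r0 ks \<longleftrightarrow> l \<in> ks"
      using level_cuts_residue[OF cut(1)] by blast
    then show "k = k'" using cut by simp
  qed
  then have "card ({0..<R} \<inter> {k. e \<in> level_cuts R E r0 {k}}) \<le> Suc 0"
    by (subst card_le_Suc0_iff_eq) auto
  then show ?thesis
    using assms unfolding phase0_def by (simp add: measure_pmf_of_set vimage_def divide_right_mono)
qed

text \<open>The components of the current graph get independent offsets, but an edge can be cut only
  inside the one component containing it, so only that component's offsets matter.\<close>

lemma phase_step_new_cut_prob_le:
  assumes "1 \<le> R" and "finite V" and "valid_tiebreak tb" and "e \<notin> fst st"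
  shows "measure_pmf.prob (phase_step R \<epsilon> tb i V E st) {s. e \<in> fst s} \<le> 2 / real R"
proof -
  define E' where "E' = E - fst st"
  define Cs where "Cs = comps V E'"
  define root where "root = (\<lambda>C. tb i C (snd st))"
  define Q where "Q = Pi_pmf Cs (0, 0) (\<lambda>C. pair_pmf (pmf_of_set {0..<R}) (k2_pmf R \<epsilon>))"
  define cut where "cut = (\<lambda>\<sigma>::nat set \<Rightarrow> nat \<times> nat. \<exists>C\<in>Cs.
      e \<in> level_cuts R E' (root C) {fst (\<sigma> C), (fst (\<sigma> C) + snd (\<sigma> C)) mod R})"
  have step: "measure_pmf.prob (phase_step R \<epsilon> tb i V E st) {s. e \<in> fst s}
      = measure_pmf.prob Q {\<sigma>. cut \<sigma>}"
    using assms(4) unfolding phase_step_def Let_def Q_def cut_def root_def Cs_def E'_def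
    by (simp add: vimage_def)
  show ?thesis
  proof (cases "\<exists>C\<in>Cs. \<exists>ks. e \<in> level_cuts R E' (root C) ks")
    case False
    then show ?thesis using step unfolding cut_def by simp
  next
    case True
    then obtain C0 ks0 where C0: "C0 \<in> Cs" "e \<in> level_cuts R E' (root C0) ks0" by blast
    obtain l where l: "\<And>ks. e \<in> level_cuts R E' (root C0) ks \<longleftrightarrow> l \<in> ks"
      using level_cuts_residue[OF C0(2)] by blast
    have root_comp: "comp V E' (root C) = C" if "C \<in> Cs" for C
      using tiebreak_root_comp(2)[OF assms(3,2)] that unfolding Cs_def root_def by blast
    have "C = C0" if "C \<in> Cs" "e \<in> level_cuts R E' (root C) ks" for C ks
      using level_cuts_same_comp[OF that(2) C0(2), of V] root_comp that(1) C0(1) by simp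
    then have "{\<sigma>. cut \<sigma>} \<subseteq> (\<lambda>\<sigma>. \<sigma> C0) -` {ab. l \<in> {fst ab, (fst ab + snd ab) mod R}}"
      unfolding cut_def using l by blast
    then have "measure_pmf.prob Q {\<sigma>. cut \<sigma>}
        \<le> measure_pmf.prob (map_pmf (\<lambda>\<sigma>. \<sigma> C0) Q) {ab. l \<in> {fst ab, (fst ab + snd ab) mod R}}"
      by (simp add: measure_pmf.finite_measure_mono)
    also have "map_pmf (\<lambda>\<sigma>. \<sigma> C0) Q = pair_pmf (pmf_of_set {0..<R}) (k2_pmf R \<epsilon>)"
      using assms(2) C0(1) unfolding Q_def Cs_def comps_def by (simp add: Pi_pmf_component)
    also have "measure_pmf.prob \<dots> {ab. l \<in> {fst ab, (fst ab + snd ab) mod R}} \<le> 2 / real R"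
      by (rule prob_uniform_hits_residue_le[OF assms(1)])
    finally show ?thesis
      using step by simp
  qed
qed

lemma TC_cut_prob_le:
  assumes "1 \<le> R" and "finite V" and "valid_tiebreak tb"
  shows "measure_pmf.prob (TC R \<epsilon> tb V E r0) {F. e \<in> F} \<le> 5 / real R"
proof -
  let ?cut = "{s::nat set set \<times> (nat \<Rightarrow> nat). e \<in> fst s}"
  let ?step = "\<lambda>i. phase_step R \<epsilon> tb i V E"
  have later: "measure_pmf.prob (bind_pmf p (?step i)) ?cut \<le> measure_pmf.prob p ?cut + 2 / real R"
    for p i
    by (rule measure_pmf_prob_bind_le) (simp_all add: phase_step_new_cut_prob_le[OF assms])
  have "measure_pmf.prob (TC R \<epsilon> tb V E r0) {F. e \<in> F}
      = measure_pmf.prob (bind_pmf (bind_pmf (phase0 R E r0) (?step 1)) (?step 2)) ?cut"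
    unfolding TC_def by (simp add: bind_assoc_pmf vimage_def)
  also have "\<dots> \<le> measure_pmf.prob (phase0 R E r0) ?cut + 2 / real R + 2 / real R"
    using later[of "bind_pmf (phase0 R E r0) (?step 1)" 2] later[of "phase0 R E r0" 1] by linarith
  also have "\<dots> \<le> 5 / real R"
    using phase0_cut_prob_le[OF assms(1), of E r0 e] by (simp add: add_divide_distrib[symmetric])
  finally show ?thesis .
qed

theorem lemma2:
  shows "\<exists>K::real. \<forall>(V::nat set) (E::nat set set) (R::nat) (\<epsilon>::real) (r0::nat) tb (u::nat) (v::nat).
    simple_graph V E \<and> connected_graph V E \<and> planar V E \<and>
    R \<ge> 1 \<and> 0 < \<epsilon> \<and> \<epsilon> \<le> 1 \<and> r0 \<in> V \<and> valid_tiebreak tb \<and> u \<in> V \<and> v \<in> V \<longrightarrow>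
    measure_pmf.prob (TC R \<epsilon> tb V E r0) {F. separated E F u v}
      \<le> K * real (gdist E u v) / real R"
proof (intro exI[of _ 5] allI impI, elim conjE)
  fix V :: "nat set" and E :: "nat set set" and R :: nat and \<epsilon> :: real and r0 tb u v
  assume "simple_graph V E" "connected_graph V E" "R \<ge> 1" "valid_tiebreak tb" "u \<in> V" "v \<in> V"
  moreover from this have "finite V" and "reach E u v"
    by (auto simp: simple_graph_def connected_graph_def)
  ultimately have "measure_pmf.prob (TC R \<epsilon> tb V E r0) {F. separated E F u v}
      \<le> real (gdist E u v) * (5 / real R)"
    by (intro prob_separated_le_gdist TC_cut_prob_le) auto
  then show "measure_pmf.prob (TC R \<epsilon> tb V E r0) {F. separated E F u v}
      \<le> 5 * real (gdist E u v) / real R"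
    by (simp add: mult.commute)
qed

end
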